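(* Let $\mathcal{SB}=\langle\mathcal{L},A,\to,\text{supp}\rangle$ be an SBAF and $S$ a weakly adequate language extension. Then $Arg_w(S)=Init(S)$.
   Context: A language is a triple $\mathcal{L}=\langle L,\overline{\cdot},n\rangle$: $L$ is a nonempty set of sentences; $\overline{\cdot}$ assigns to each $s\in L$ a set $\overline{s}\subseteq L$ of sentences incompatible with $s$, and is symmetric; $n$ is a partial naming function assigning to an argument $a$ a sentence $n(a)\in L$ (if undefined, put $\overline{n(a)}:=\emptyset$), with $\overline{n(\langle\{t\},t\rangle)}=\emptyset$. An argument is a pair $a=\langle Prem(a),Conc(a)\rangle$ with $Prem(a)$ a nonempty finite subset of $L$ and $Conc(a)\in L$; $Sent(a):=Prem(a)\cup\{Conc(a)\}$, $Sent(E):=\bigcup_{a\in E}Sent(a)$. Argument $a$ attacks $b$ ($a\to b$) if $Conc(a)\in\overline{s}$ for some $s\in Sent(b)$ or $Conc(a)\in\overline{n(b)}$. An SBAF is $\langle\mathcal{L},A,\to,\text{supp}\rangle$ with $A$ a finite set of arguments. For $E\subseteq A$: $E$ defends $a\in A$ if for every $b\in A$ with $b\to a$ some element of $E$ attacks $b$; $E$ is conflict-free if no $a,b\in E$ with $a\to b$; admissible if conflict-free and defends all its elements. $S$ is compatible if no $s,t\in S$ with $s\in\overline t$. $Arg_s(S):=\{a\in A\mid Prem(a)\subseteq S\text{ and }\overline{n(a)}\cap S=\emptyset\}$; $R^S(E):=\{a\in A\mid a\in Arg_s(S)\text{ and }E\text{ defends }a\}$. For compatible $S$, $Init(S)$ is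 the largest admissible subset of $\{a\in A\mid Sent(a)\subseteq S\text{ and }\overline{n(a)}\cap S=\emptyset\}$, and $Arg_w(S)$ is the $\subseteq$-least set $E$ with $Init(S)\subseteq E$ and $R^S(E)=E$. A weakly adequate language extension is a compatible $S\subseteq Sent(A)$ such that $Sent(a)\subseteq S$ for every $a\in Arg_w(S)$. *)

theory Defs
  imports Main
begin

text \<open>Sentences have type 'a. An argument is a pair (Prem, Conc).
  The incompatibility map is inc :: 'a => 'a set (overline), the partial
  naming function is n :: 'a arg => 'a option.\<close>

type_synonym 'a arg = "'a set \<times> 'a"

definition Prem :: "'a arg \<Rightarrow> 'a set" where "Prem a = fst a"
definition Conc :: "'a arg \<Rightarrow> 'a" where "Conc a = snd a"
definition Sent :: "'a arg \<Rightarrow> 'a set" where "Sent a = Prem a \<union> {Conc a}"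
definition SentSet :: "'a arg set \<Rightarrow> 'a set" where "SentSet E = (\<Union>a\<in>E. Sent a)"

definition nbar :: "('a \<Rightarrow> 'a set) \<Rightarrow> ('a arg \<Rightarrow> 'a option) \<Rightarrow> 'a arg \<Rightarrow> 'a set" where
  "nbar inc n a = (case n a of None \<Rightarrow> {} | Some s \<Rightarrow> inc s)"

definition language :: "'a set \<Rightarrow> ('a \<Rightarrow> 'a set) \<Rightarrow> ('a arg \<Rightarrow> 'a option) \<Rightarrow> bool" where
  "language L inc n \<longleftrightarrow>
     L \<noteq> {} \<and>
     (\<forall>s\<in>L. inc s \<subseteq> L) \<and>
     (\<forall>s\<in>L. \<forall>t\<in>L. s \<in> inc t \<longleftrightarrow> t \<in> inc s) \<and>
     (\<forall>a s. n a = Some s \<longrightarrow> s \<in> L) \<and>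
     (\<forall>t. nbar inc n ({t}, t) = {})"

definition is_argument :: "'a set \<Rightarrow> 'a arg \<Rightarrow> bool" where
  "is_argument L a \<longleftrightarrow> Prem a \<noteq> {} \<and> finite (Prem a) \<and> Prem a \<subseteq> L \<and> Conc a \<in> L"

definition attacks :: "('a \<Rightarrow> 'a set) \<Rightarrow> ('a arg \<Rightarrow> 'a option) \<Rightarrow> 'a arg \<Rightarrow> 'a arg \<Rightarrow> bool" where
  "attacks inc n a b \<longleftrightarrow> (\<exists>s\<in>Sent b. Conc a \<in> inc s) \<or> Conc a \<in> nbar inc n b"

text \<open>SBAF <L, A, attack, supp>; the attack relation is determined by inc and n.\<close>
definition SBAF :: "'a set \<Rightarrow> ('a \<Rightarrow> 'a set) \<Rightarrow> ('a arg \<Rightarrow> 'a option) \<Rightarrow> 'a arg set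
     \<Rightarrow> ('a arg \<times> 'a arg) set \<Rightarrow> bool" where
  "SBAF L inc n A supp \<longleftrightarrow> language L inc n \<and> finite A \<and> (\<forall>a\<in>A. is_argument L a)
     \<and> supp \<subseteq> A \<times> A"

definition defends :: "('a \<Rightarrow> 'a set) \<Rightarrow> ('a arg \<Rightarrow> 'a option) \<Rightarrow> 'a arg set \<Rightarrow> 'a arg set \<Rightarrow> 'a arg \<Rightarrow> bool" where
  "defends inc n A E a \<longleftrightarrow> (\<forall>b\<in>A. attacks inc n b a \<longrightarrow> (\<exists>c\<in>E. attacks inc n c b))"

definition conflict_free :: "('a \<Rightarrow> 'a set) \<Rightarrow> ('a arg \<Rightarrow> 'a option) \<Rightarrow> 'a arg set \<Rightarrow> bool" where
  "conflict_free inc n E \<longleftrightarrow> (\<forall>a\<in>E. \<forall>b\<in>E. \<not> attacks inc n a b)"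

definition admissible :: "('a \<Rightarrow> 'a set) \<Rightarrow> ('a arg \<Rightarrow> 'a option) \<Rightarrow> 'a arg set \<Rightarrow> 'a arg set \<Rightarrow> bool" where
  "admissible inc n A E \<longleftrightarrow> conflict_free inc n E \<and> (\<forall>a\<in>E. defends inc n A E a)"

definition compatible :: "('a \<Rightarrow> 'a set) \<Rightarrow> 'a set \<Rightarrow> bool" where
  "compatible inc S \<longleftrightarrow> (\<forall>s\<in>S. \<forall>t\<in>S. s \<notin> inc t)"

definition Arg_s :: "('a \<Rightarrow> 'a set) \<Rightarrow> ('a arg \<Rightarrow> 'a option) \<Rightarrow> 'a arg set \<Rightarrow> 'a set \<Rightarrow> 'a arg set" where
  "Arg_s inc n A S = {a\<in>A. Prem a \<subseteq> S \<and> nbar inc n a \<inter> S = {}}"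

definition R_S :: "('a \<Rightarrow> 'a set) \<Rightarrow> ('a arg \<Rightarrow> 'a option) \<Rightarrow> 'a arg set \<Rightarrow> 'a set \<Rightarrow> 'a arg set \<Rightarrow> 'a arg set" where
  "R_S inc n A S E = {a\<in>A. a \<in> Arg_s inc n A S \<and> defends inc n A E a}"

definition Init_cands :: "('a \<Rightarrow> 'a set) \<Rightarrow> ('a arg \<Rightarrow> 'a option) \<Rightarrow> 'a arg set \<Rightarrow> 'a set \<Rightarrow> 'a arg set" where
  "Init_cands inc n A S = {a\<in>A. Sent a \<subseteq> S \<and> nbar inc n a \<inter> S = {}}"

definition Init :: "('a \<Rightarrow> 'a set) \<Rightarrow> ('a arg \<Rightarrow> 'a option) \<Rightarrow> 'a arg set \<Rightarrow> 'a set \<Rightarrow> 'a arg set" where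
  "Init inc n A S = (THE E. E \<subseteq> Init_cands inc n A S \<and> admissible inc n A E \<and>
      (\<forall>E'. E' \<subseteq> Init_cands inc n A S \<and> admissible inc n A E' \<longrightarrow> E' \<subseteq> E))"

definition Arg_w :: "('a \<Rightarrow> 'a set) \<Rightarrow> ('a arg \<Rightarrow> 'a option) \<Rightarrow> 'a arg set \<Rightarrow> 'a set \<Rightarrow> 'a arg set" where
  "Arg_w inc n A S = (THE E. Init inc n A S \<subseteq> E \<and> R_S inc n A S E = E \<and>
      (\<forall>E'. Init inc n A S \<subseteq> E' \<and> R_S inc n A S E' = E' \<longrightarrow> E \<subseteq> E'))"

definition weakly_adequate :: "('a \<Rightarrow> 'a set) \<Rightarrow> ('a arg \<Rightarrow> 'a option) \<Rightarrow> 'a arg set \<Rightarrow> 'a set \<Rightarrow> bool" where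
  "weakly_adequate inc n A S \<longleftrightarrow> compatible inc S \<and> S \<subseteq> SentSet A \<and>
      (\<forall>a\<in>Arg_w inc n A S. Sent a \<subseteq> S)"

end

theory Submission
  imports Defs
begin

text \<open>Since \<open>Arg_w(S)\<close> is a fixed point of \<open>R\<^sup>S\<close>, it defends each of its elements and the
  premises of each lie in \<open>S\<close>; weak adequacy puts all sentences of its elements into \<open>S\<close>.
  Arguments whose sentences lie in the compatible set \<open>S\<close> cannot attack each other, so
  \<open>Arg_w(S)\<close> is an admissible set of candidates for \<open>Init(S)\<close> and is therefore contained in
  the largest one.\<close>

lemma Init_eq_Greatest:
  "Init inc n A S = (GREATEST E. E \<subseteq> Init_cands inc n A S \<and> admissible inc n A E)"
  by (simp add: Init_def Greatest_def conj_assoc)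

lemma Arg_w_eq_Least:
  "Arg_w inc n A S = (LEAST E. Init inc n A S \<subseteq> E \<and> R_S inc n A S E = E)"
  by (simp add: Arg_w_def Least_def conj_assoc)

lemma least_fixpoint_above:
  fixes f :: "'a::complete_lattice \<Rightarrow> 'a"
  assumes "mono f" and "x \<le> f x"
  shows "x \<le> (LEAST y. x \<le> y \<and> f y = y) \<and>
    f (LEAST y. x \<le> y \<and> f y = y) = (LEAST y. x \<le> y \<and> f y = y)"
proof -
  let ?w = "lfp (\<lambda>y. sup (f y) x)"
  have "mono (\<lambda>y. sup (f y) x)"
    using assms(1) by (simp add: mono_def le_supI1 monoD)
  then have unfold: "?w = sup (f ?w) x"
    by (rule lfp_unfold)
  then have "x \<le> ?w"
    by (metis sup_ge2)
  then have "x \<le> f ?w"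
    using assms by (metis monoD order_trans)
  then have fixpoint: "x \<le> ?w \<and> f ?w = ?w"
    using unfold \<open>x \<le> ?w\<close> by (simp add: sup_absorb1)
  have "(LEAST y. x \<le> y \<and> f y = y) = ?w"
  proof (rule Least_equality)
    show "?w \<le> y" if "x \<le> y \<and> f y = y" for y
      using that by (intro lfp_lowerbound) simp
  qed (rule fixpoint)
  then show ?thesis
    using fixpoint by simp
qed

lemma defends_mono: "E \<subseteq> E' \<Longrightarrow> defends inc n A E a \<Longrightarrow> defends inc n A E' a"
  unfolding defends_def by blast

lemma R_S_mono: "mono (R_S inc n A S)"
  unfolding R_S_def mono_def using defends_mono by blast

lemma conflict_free_if_subset_Init_cands:
  assumes "compatible inc S" and "E \<subseteq> Init_cands inc n A S"
  shows "conflict_free inc n E"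
  unfolding conflict_free_def
proof (intro ballI notI)
  fix a b assume "a \<in> E" "b \<in> E" and "attacks inc n a b"
  then have "Conc a \<in> S" "Sent b \<subseteq> S" "nbar inc n b \<inter> S = {}"
      "(\<exists>s\<in>Sent b. Conc a \<in> inc s) \<or> Conc a \<in> nbar inc n b"
    using assms(2) by (auto simp: Init_cands_def Sent_def attacks_def)
  then show False
    using assms(1) unfolding compatible_def by blast
qed

lemma defends_Union:
  assumes "\<And>E. E \<in> \<E> \<Longrightarrow> \<forall>a\<in>E. defends inc n A E a"
  shows "\<forall>a\<in>\<Union>\<E>. defends inc n A (\<Union>\<E>) a"
  using assms defends_mono[OF Union_upper] by blast

lemma admissible_Union_Init_cands:
  assumes "compatible inc S"
  shows "admissible inc n A (\<Union>{E. E \<subseteq> Init_cands inc n A S \<and> admissible inc n A E})"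
proof (rule admissible_def[THEN iffD2, OF conjI])
  show "conflict_free inc n (\<Union>{E. E \<subseteq> Init_cands inc n A S \<and> admissible inc n A E})"
    by (rule conflict_free_if_subset_Init_cands[OF assms]) blast
  show "\<forall>a\<in>\<Union>{E. E \<subseteq> Init_cands inc n A S \<and> admissible inc n A E}.
      defends inc n A (\<Union>{E. E \<subseteq> Init_cands inc n A S \<and> admissible inc n A E}) a"
    by (rule defends_Union) (simp add: admissible_def)
qed

lemma Init_eq_Union:
  assumes "compatible inc S"
  shows "Init inc n A S = \<Union>{E. E \<subseteq> Init_cands inc n A S \<and> admissible inc n A E}"
  unfolding Init_eq_Greatest
proof (rule Greatest_equality)
  show "\<Union>{E. E \<subseteq> Init_cands inc n A S \<and> admissible inc n A E} \<subseteq> Init_cands inc n A S \<and>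
      admissible inc n A (\<Union>{E. E \<subseteq> Init_cands inc n A S \<and> admissible inc n A E})"
    using admissible_Union_Init_cands[OF assms] by blast
qed blast

lemma
  assumes "compatible inc S"
  shows Init_subset_Init_cands: "Init inc n A S \<subseteq> Init_cands inc n A S"
    and admissible_Init: "admissible inc n A (Init inc n A S)"
    and admissible_subset_Init:
      "E \<subseteq> Init_cands inc n A S \<Longrightarrow> admissible inc n A E \<Longrightarrow> E \<subseteq> Init inc n A S"
  using admissible_Union_Init_cands[OF assms] by (auto simp: Init_eq_Union[OF assms])

lemma Init_subset_R_S_Init:
  assumes "compatible inc S"
  shows "Init inc n A S \<subseteq> R_S inc n A S (Init inc n A S)"
  using Init_subset_Init_cands[OF assms, of n A] admissible_Init[OF assms, of n A]
  unfolding R_S_def Arg_s_def Init_cands_def Sent_def admissible_def by blast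

lemma
  assumes "compatible inc S"
  shows Init_subset_Arg_w: "Init inc n A S \<subseteq> Arg_w inc n A S"
    and R_S_Arg_w: "R_S inc n A S (Arg_w inc n A S) = Arg_w inc n A S"
  using least_fixpoint_above[OF R_S_mono Init_subset_R_S_Init[OF assms]]
  by (simp_all add: Arg_w_eq_Least)

theorem mainTheorem13:
  fixes L :: "'a set" and inc :: "'a \<Rightarrow> 'a set" and n :: "'a arg \<Rightarrow> 'a option"
    and A :: "'a arg set" and supp :: "('a arg \<times> 'a arg) set" and S :: "'a set"
  assumes "SBAF L inc n A supp"
    and "weakly_adequate inc n A S"
  shows "Arg_w inc n A S = Init inc n A S"
proof
  have compatible: "compatible inc S"
    and adequate: "\<forall>a\<in>Arg_w inc n A S. Sent a \<subseteq> S"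
    using assms(2) by (auto simp: weakly_adequate_def)
  have fixpoint: "a \<in> Arg_w inc n A S \<longleftrightarrow>
      a \<in> A \<and> a \<in> Arg_s inc n A S \<and> defends inc n A (Arg_w inc n A S) a" for a
    using R_S_Arg_w[OF compatible] by (auto simp: R_S_def)
  have candidates: "Arg_w inc n A S \<subseteq> Init_cands inc n A S"
    using fixpoint adequate by (auto simp: Arg_s_def Init_cands_def)
  have "admissible inc n A (Arg_w inc n A S)"
    using conflict_free_if_subset_Init_cands[OF compatible candidates] fixpoint
    by (simp add: admissible_def)
  then show "Arg_w inc n A S \<subseteq> Init inc n A S"
    using admissible_subset_Init[OF compatible candidates] by simp
  show "Init inc n A S \<subseteq> Arg_w inc n A S"
    by (rule Init_subset_Arg_w[OF compatible])
qed

end
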